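(* Let $T$ be a finite tree with $m$ edges, let $u \in V(T)$, $n \in \mathbf{N}$, and $i \in \{1,\ldots,n\}$. Then \[ \sum_{\substack{F \in I(T,n)\\ F(u)=i}} P(T,F) \le C^m . \]
   Context: For each $n \in \mathbf{N}$, $W_n = (w_{ij}^{(n)})_{i,j=1}^n$ is a random $n \times n$ Hermitian matrix whose upper triangular entries (diagonal included) are jointly independent, have mean zero and finite variances. It is assumed that there is a finite constant $C \ge 0$ such that \[ \sum_{j=1}^n \operatorname{Var}\bigl[w_{ij}^{(n)}\bigr] \le C \qquad \text{for all } n = 1,2,\ldots \text{ and } i = 1,\ldots,n. \] Graphs are undirected, may have loops, but have no multiple edges. For a finite graph $G$ and $n \in \mathbf{N}$, $I(G,n)$ denotes the set of all injections from $V(G)$ into $\{1,\ldots,n\}$. For $F \in I(G,n)$, \[ P(G,F) := \prod_{e \in E(G)} \operatorname{Var}\bigl[w_{F(u_e)F(v_e)}^{(n)}\bigr], \] where $u_e, v_e$ are the ends of the edge $e$ (well-defined since $W_n$ is Hermitian); an empty product equals $1$. *)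

theory Defs
  imports "HOL-Probability.Probability"
begin

definition cvariance :: "'a measure \<Rightarrow> ('a \<Rightarrow> complex) \<Rightarrow> real" where
  "cvariance M X = (\<integral>x. (cmod (X x - (\<integral>y. X y \<partial>M)))\<^sup>2 \<partial>M)"

(* Finite graphs (undirected, loops allowed, no multiple edges):
   vertex set V, edge set E of 1- or 2-element subsets of V. *)
definition graph :: "'v set \<Rightarrow> 'v set set \<Rightarrow> bool" where
  "graph V E \<longleftrightarrow> finite V \<and> (\<forall>e\<in>E. e \<subseteq> V \<and> (card e = 1 \<or> card e = 2))"

definition adj :: "'v set set \<Rightarrow> 'v \<Rightarrow> 'v \<Rightarrow> bool" where
  "adj E x y \<longleftrightarrow> {x, y} \<in> E"

definition connected_graph :: "'v set \<Rightarrow> 'v set set \<Rightarrow> bool" where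
  "connected_graph V E \<longleftrightarrow> (\<forall>x\<in>V. \<forall>y\<in>V. (adj E)\<^sup>*\<^sup>* x y)"

definition is_cycle :: "'v set set \<Rightarrow> 'v list \<Rightarrow> bool" where
  "is_cycle E vs \<longleftrightarrow> length vs \<ge> 3 \<and> distinct vs \<and>
     (\<forall>k < length vs - 1. adj E (vs ! k) (vs ! Suc k)) \<and> adj E (last vs) (hd vs)"

definition tree :: "'v set \<Rightarrow> 'v set set \<Rightarrow> bool" where
  "tree V E \<longleftrightarrow> graph V E \<and> V \<noteq> {} \<and> connected_graph V E \<and>
     (\<forall>e\<in>E. card e = 2) \<and> (\<nexists>vs. is_cycle E vs)"

definition injs :: "'v set \<Rightarrow> nat \<Rightarrow> ('v \<Rightarrow> nat) set" where
  "injs V n = {F. F \<in> V \<rightarrow>\<^sub>E {1..n} \<and> inj_on F V}"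

(* P(G,F) = prod over edges e of Var[w_{F(u_e) F(v_e)}]; the two ends are
   ordered as (Min, Max) of the image, which is harmless since W_n is Hermitian *)
definition Pw :: "'a measure \<Rightarrow> (nat \<Rightarrow> nat \<Rightarrow> nat \<Rightarrow> 'a \<Rightarrow> complex) \<Rightarrow> nat
                  \<Rightarrow> 'v set set \<Rightarrow> ('v \<Rightarrow> nat) \<Rightarrow> real" where
  "Pw M W n E F = (\<Prod>e\<in>E. cvariance M (W n (Min (F ` e)) (Max (F ` e))))"

end

theory Submission
  imports Defs
begin

text \<open>Relaxing injections to arbitrary maps \<open>F\<close> into \<open>{1..n}\<close> with \<open>F u = i\<close> can only
  enlarge the sum, since all weights are nonnegative. For arbitrary maps the sum is peeled off one
  leaf \<open>l \<noteq> u\<close> at a time: if \<open>p\<close> is the neighbour of \<open>l\<close>, summing over the value of \<open>F l\<close>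
  produces the row sum \<open>\<Sum>j. Var[w\<^bsub>F p, j\<^esub>] \<le> C\<close> (Hermitian symmetry makes the weight of an
  edge independent of its orientation), and induction on the number of vertices gives \<open>C ^ m\<close>.\<close>

lemma adj_commute: "adj E x y \<longleftrightarrow> adj E y x"
  by (simp add: adj_def insert_commute)

lemma symp_adj: "symp (adj E)"
  by (simp add: sympI adj_commute)

lemma tree_not_adj_self: "tree V E \<Longrightarrow> \<not> adj E x x"
  unfolding tree_def adj_def by force

lemma tree_adj_in_verts:
  assumes "tree V E" "adj E x y"
  shows "x \<in> V" "y \<in> V"
  using assms unfolding tree_def graph_def adj_def by blast+

lemma tree_finite:
  assumes "tree V E"
  shows "finite V" "finite E"
proof -
  show "finite V" using assms by (simp add: tree_def graph_def)
  moreover have "E \<subseteq> Pow V" using assms by (auto simp: tree_def graph_def)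
  ultimately show "finite E" by (meson finite_Pow_iff finite_subset)
qed

lemma tree_singleton_edges_empty:
  assumes "tree {u} E"
  shows "E = {}"
proof -
  have "e \<notin> E" for e
  proof
    assume "e \<in> E"
    then have "e \<subseteq> {u}" "card e = 2" using assms by (auto simp: tree_def graph_def)
    then show False using card_mono[of "{u}" e] by simp
  qed
  then show ?thesis by blast
qed

definition path_from :: "'v set \<Rightarrow> 'v set set \<Rightarrow> 'v \<Rightarrow> 'v list \<Rightarrow> bool" where
  "path_from V E u vs \<longleftrightarrow> vs \<noteq> [] \<and> hd vs = u \<and> distinct vs \<and> set vs \<subseteq> V \<and>
     (\<forall>k < length vs - 1. adj E (vs ! k) (vs ! Suc k))"

lemma path_from_length_le_card:
  assumes "path_from V E u vs" "finite V"
  shows "length vs \<le> card V"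
  using assms card_mono[of V "set vs"] distinct_card[of vs] by (simp add: path_from_def)

lemma path_from_snoc:
  assumes "path_from V E u vs" "adj E (last vs) w" "w \<in> V" "w \<notin> set vs"
  shows "path_from V E u (vs @ [w])"
  unfolding path_from_def
proof (intro conjI allI impI)
  show "vs @ [w] \<noteq> []" "hd (vs @ [w]) = u" "distinct (vs @ [w])" "set (vs @ [w]) \<subseteq> V"
    using assms by (auto simp: path_from_def)
  fix k assume k: "k < length (vs @ [w]) - 1"
  show "adj E ((vs @ [w]) ! k) ((vs @ [w]) ! Suc k)"
  proof (cases "Suc k < length vs")
    case True
    then show ?thesis using assms(1) by (simp add: path_from_def nth_append)
  next
    case False
    then have "k = length vs - 1" using k by simp
    then show ?thesis using assms(1,2) by (simp add: path_from_def nth_append last_conv_nth)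
  qed
qed

lemma path_from_drop_is_cycle:
  assumes "path_from V E u vs" "k + 2 < length vs" "adj E (last vs) (vs ! k)"
  shows "is_cycle E (drop k vs)"
  using assms
  by (auto simp: is_cycle_def path_from_def hd_drop_conv_nth add.commute[of k] less_diff_conv)

lemma obtain_longest_path_from:
  assumes "finite V" "u \<in> V"
  obtains vs where "path_from V E u vs" "\<And>ys. path_from V E u ys \<Longrightarrow> length ys \<le> length vs"
proof -
  have "path_from V E u [u]" using assms(2) by (simp add: path_from_def)
  moreover have "\<forall>ys. path_from V E u ys \<longrightarrow> length ys < Suc (card V)"
    using path_from_length_le_card[OF _ assms(1)] by (simp add: less_Suc_eq_le)
  ultimately show ?thesis
    using that ex_has_greatest_nat[of "path_from V E u" "[u]" length "Suc (card V)"] by blast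
qed

text \<open>The last vertex of a longest path from \<open>u\<close> is a leaf: a further neighbour off the path
  would extend the path, and one on the path would close a cycle.\<close>

lemma tree_obtain_leaf:
  assumes T: "tree V E" and u: "u \<in> V" and nontrivial: "V \<noteq> {u}"
  obtains l p where "l \<noteq> u" "{l, p} \<in> E" "\<And>w. adj E l w \<Longrightarrow> w = p"
proof -
  obtain v where "v \<in> V" "v \<noteq> u" using u nontrivial by blast
  moreover have "(adj E)\<^sup>*\<^sup>* u v" if "v \<in> V" using T u that by (auto simp: tree_def connected_graph_def)
  ultimately obtain w where uw: "adj E u w" by (metis converse_rtranclpE)
  have path_uw: "path_from V E u [u, w]"
    using uw tree_adj_in_verts[OF T uw] tree_not_adj_self[OF T] by (auto simp: path_from_def)
  obtain vs where vs: "path_from V E u vs"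
    and longest: "\<And>ys. path_from V E u ys \<Longrightarrow> length ys \<le> length vs"
    using obtain_longest_path_from[OF tree_finite(1)[OF T] u] by blast
  define L where "L = length vs"
  have "L \<ge> 2" using longest[OF path_uw] by (simp add: L_def)
  define l where "l = last vs"
  define p where "p = vs ! (L - 2)"
  have nth_l: "vs ! (L - 1) = l" using vs by (simp add: path_from_def l_def L_def last_conv_nth)
  have "vs ! (L - 1) \<noteq> vs ! 0"
    using vs \<open>L \<ge> 2\<close> nth_eq_iff_index_eq[of vs "L - 1" 0] by (auto simp: path_from_def L_def)
  then have "l \<noteq> u" using vs nth_l by (auto simp: path_from_def hd_conv_nth)
  moreover have "adj E p l"
  proof -
    have "adj E (vs ! (L - 2)) (vs ! Suc (L - 2))"
      using vs \<open>L \<ge> 2\<close> by (simp add: path_from_def L_def)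
    moreover have "Suc (L - 2) = L - 1" using \<open>L \<ge> 2\<close> by simp
    ultimately show ?thesis using nth_l by (metis p_def)
  qed
  moreover have "w = p" if lw: "adj E l w" for w
  proof (cases "w \<in> set vs")
    case False
    have "path_from V E u (vs @ [w])"
      using path_from_snoc[OF vs] lw False tree_adj_in_verts[OF T lw] by (simp add: l_def)
    then show ?thesis using longest by fastforce
  next
    case True
    then obtain k where k: "k < L" "w = vs ! k" by (auto simp: in_set_conv_nth L_def)
    consider "k = L - 1" | "k = L - 2" | "k + 2 < L" using k(1) by linarith
    then show ?thesis
    proof cases
      case 1
      then show ?thesis using lw k nth_l tree_not_adj_self[OF T] by simp
    next
      case 2
      then show ?thesis using k by (simp add: p_def)
    next
      case 3
      then have "is_cycle E (drop k vs)"
        using path_from_drop_is_cycle[OF vs] lw k by (simp add: L_def l_def)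
      then show ?thesis using T by (auto simp: tree_def)
    qed
  qed
  ultimately show ?thesis using that by (metis adj_def insert_commute)
qed

lemma tree_edge_at_leaf:
  assumes "tree V E" "\<And>w. adj E l w \<Longrightarrow> w = p" "e \<in> E" "l \<in> e"
  shows "e = {l, p}"
proof -
  obtain a b where "e = {a, b}" using assms(1,3) unfolding tree_def card_2_iff by blast
  then show ?thesis using assms(2-4) by (auto simp: adj_def insert_commute)
qed

lemma rtranclp_adj_remove_leaf:
  assumes "(adj E)\<^sup>*\<^sup>* u y" "u \<noteq> l" "\<And>w. adj E l w \<Longrightarrow> w = p"
  shows "(adj (E - {{l, p}}))\<^sup>*\<^sup>* u (if y = l then p else y)"
  using assms(1)
proof (induction rule: rtranclp_induct)
  case base
  then show ?case using assms(2) by simp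
next
  case (step y z)
  consider "y = l" | "y \<noteq> l" "z = l" | "y \<noteq> l" "z \<noteq> l" by blast
  then show ?case
  proof cases
    case 1
    then have "z = p" using step(2) assms(3) by blast
    then show ?thesis using step(3) 1 by (simp only: if_P[OF refl] if_cancel)
  next
    case 2
    then show ?thesis using step assms(3) adj_commute by fastforce
  next
    case 3
    then have "adj (E - {{l, p}}) y z" using step(2) by (auto simp: adj_def doubleton_eq_iff)
    then show ?thesis using step 3 by (simp add: rtranclp.rtrancl_into_rtrancl)
  qed
qed

lemma tree_remove_leaf:
  assumes T: "tree V E" and u: "u \<in> V" and "l \<noteq> u"
    and leaf: "\<And>w. adj E l w \<Longrightarrow> w = p"
  shows "tree (V - {l}) (E - {{l, p}})"
  unfolding tree_def
proof (intro conjI)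
  show "graph (V - {l}) (E - {{l, p}})"
    using T tree_edge_at_leaf[OF T leaf] by (auto simp: tree_def graph_def)
  show "connected_graph (V - {l}) (E - {{l, p}})"
    unfolding connected_graph_def
  proof (intro ballI)
    fix x y assume "x \<in> V - {l}" "y \<in> V - {l}"
    moreover have "(adj (E - {{l, p}}))\<^sup>*\<^sup>* u v" if "v \<in> V - {l}" for v
      using rtranclp_adj_remove_leaf[where y = v, OF _ \<open>l \<noteq> u\<close>[symmetric] leaf] that T u
      by (auto simp: tree_def connected_graph_def)
    ultimately have "(adj (E - {{l, p}}))\<^sup>*\<^sup>* u x" "(adj (E - {{l, p}}))\<^sup>*\<^sup>* u y"
      by blast+
    then show "(adj (E - {{l, p}}))\<^sup>*\<^sup>* x y"
      by (meson rtranclp_trans sympD symp_adj symp_rtranclp)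
  qed
  show "\<nexists>vs. is_cycle (E - {{l, p}}) vs"
    using T by (auto simp: tree_def is_cycle_def adj_def)
qed (use T u \<open>l \<noteq> u\<close> in \<open>auto simp: tree_def\<close>)

lemma sum_PiE_insert:
  assumes "x \<notin> S"
  shows "(\<Sum>F\<in>Pi\<^sub>E (insert x S) T. f F) = (\<Sum>b\<in>T x. \<Sum>F\<in>Pi\<^sub>E S T. f (F(x := b)))"
  unfolding PiE_insert_eq sum.cartesian_product
  by (subst sum.reindex[OF inj_combinator[OF assms]]) (simp add: case_prod_unfold)

lemma sum_prod_edge_weights_remove_leaf:
  fixes g :: "'b set \<Rightarrow> 'c :: comm_semiring_1"
  assumes "finite E" "l \<notin> V" "{l, p} \<in> E" "p \<noteq> l"
    and leaf_edge: "\<And>e. e \<in> E \<Longrightarrow> l \<in> e \<Longrightarrow> e = {l, p}"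
  shows "(\<Sum>F\<in>Pi\<^sub>E (insert l V) T. \<Prod>e\<in>E. g (F ` e))
    = (\<Sum>F\<in>Pi\<^sub>E V T. (\<Sum>b\<in>T l. g {F p, b}) * (\<Prod>e\<in>E - {{l, p}}. g (F ` e)))"
proof -
  have weight_split: "(\<Prod>e\<in>E. g (F(l := b) ` e)) = g {F p, b} * (\<Prod>e\<in>E - {{l, p}}. g (F ` e))"
    for F b
  proof -
    have "(\<Prod>e\<in>E. g (F(l := b) ` e))
        = g (F(l := b) ` {l, p}) * (\<Prod>e\<in>E - {{l, p}}. g (F(l := b) ` e))"
      using assms(1,3) by (simp add: prod.remove)
    also have "(\<Prod>e\<in>E - {{l, p}}. g (F(l := b) ` e)) = (\<Prod>e\<in>E - {{l, p}}. g (F ` e))"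
      using leaf_edge by (intro prod.cong refl arg_cong[where f = g] image_cong) auto
    finally show ?thesis using assms(4) by (simp add: insert_commute)
  qed
  show ?thesis
    unfolding sum_PiE_insert[OF assms(2)] weight_split
    by (subst sum.swap) (simp add: sum_distrib_right)
qed

lemma tree_sum_prod_edge_weights_le:
  fixes g :: "'b set \<Rightarrow> real" and C :: real
  assumes "tree V E" "u \<in> V" "\<And>v. v \<in> V \<Longrightarrow> S v \<subseteq> A" and "finite A"
    and weight_nonneg: "\<And>B. 0 \<le> g B"
    and row_sum: "\<And>a. a \<in> A \<Longrightarrow> (\<Sum>b\<in>A. g {a, b}) \<le> C" and "0 \<le> C"
  shows "(\<Sum>F\<in>Pi\<^sub>E V S. \<Prod>e\<in>E. g (F ` e)) \<le> card (S u) * C ^ card E"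
  using assms(1-3)
proof (induction "card V" arbitrary: V E rule: less_induct)
  case less
  note T = \<open>tree V E\<close> and u = \<open>u \<in> V\<close> and SA = \<open>\<And>v. v \<in> V \<Longrightarrow> S v \<subseteq> A\<close>
  show ?case
  proof (cases "V = {u}")
    case True
    then have "E = {}" using T tree_singleton_edges_empty[of u E] by simp
    then show ?thesis using True by (simp add: card_PiE)
  next
    case False
    obtain l p where l: "l \<noteq> u" "{l, p} \<in> E" and leaf: "\<And>w. adj E l w \<Longrightarrow> w = p"
      using tree_obtain_leaf[OF T u False] by blast
    have "adj E l p" using l(2) by (simp add: adj_def)
    then have "l \<in> V" "p \<in> V" "p \<noteq> l"
      using tree_adj_in_verts[OF T] tree_not_adj_self[OF T] by auto
    define V' where "V' = V - {l}"
    define E' where "E' = E - {{l, p}}"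
    have V: "V = insert l V'" "l \<notin> V'" using \<open>l \<in> V\<close> by (auto simp: V'_def)
    have card_V: "card V' < card V"
      unfolding V'_def using tree_finite(1)[OF T] \<open>l \<in> V\<close> by (rule card_Diff1_less)
    have "tree V' E'" unfolding V'_def E'_def using tree_remove_leaf[OF T u l(1) leaf] .
    then have IH: "(\<Sum>F\<in>Pi\<^sub>E V' S. \<Prod>e\<in>E'. g (F ` e)) \<le> card (S u) * C ^ card E'"
      using less.hyps[OF card_V] u l(1) SA by (simp add: V'_def)
    have card_E: "card E = Suc (card E')"
      unfolding E'_def using tree_finite(2)[OF T] l(2) by (rule card_Suc_Diff1[symmetric])
    have leaf_sum: "(\<Sum>b\<in>S l. g {F p, b}) \<le> C" if "F \<in> Pi\<^sub>E V' S" for F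
    proof -
      have "F p \<in> A" using that SA \<open>p \<in> V\<close> \<open>p \<noteq> l\<close> by (auto simp: V'_def)
      have "(\<Sum>b\<in>S l. g {F p, b}) \<le> (\<Sum>b\<in>A. g {F p, b})"
        using SA[OF \<open>l \<in> V\<close>] \<open>finite A\<close> weight_nonneg by (intro sum_mono2) auto
      also have "\<dots> \<le> C" using row_sum[OF \<open>F p \<in> A\<close>] .
      finally show ?thesis .
    qed
    have "(\<Sum>F\<in>Pi\<^sub>E V S. \<Prod>e\<in>E. g (F ` e))
        = (\<Sum>F\<in>Pi\<^sub>E V' S. (\<Sum>b\<in>S l. g {F p, b}) * (\<Prod>e\<in>E'. g (F ` e)))"
      unfolding V(1) E'_def using tree_finite(2)[OF T] V(2) l(2) \<open>p \<noteq> l\<close> tree_edge_at_leaf[OF T leaf]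
      by (rule sum_prod_edge_weights_remove_leaf)
    also have "\<dots> \<le> (\<Sum>F\<in>Pi\<^sub>E V' S. C * (\<Prod>e\<in>E'. g (F ` e)))"
      using leaf_sum weight_nonneg by (intro sum_mono mult_right_mono prod_nonneg) auto
    also have "\<dots> \<le> C * (card (S u) * C ^ card E')"
      using IH \<open>0 \<le> C\<close> by (simp add: sum_distrib_left[symmetric] mult_left_mono)
    also have "\<dots> = card (S u) * C ^ card E" by (simp add: card_E)
    finally show ?thesis .
  qed
qed

lemma cvariance_nonneg: "0 \<le> cvariance M X"
  by (simp add: cvariance_def)

lemma cvariance_cnj: "cvariance M (\<lambda>x. cnj (X x)) = cvariance M X"
  unfolding cvariance_def by (simp flip: complex_cnj_diff)

theorem lemma3p1:
  fixes M :: "'a measure" and W :: "nat \<Rightarrow> nat \<Rightarrow> nat \<Rightarrow> 'a \<Rightarrow> complex"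
    and C :: real and V :: "'v set" and E :: "'v set set"
    and m n i :: nat and u :: 'v
  assumes P: "prob_space M"
    and meas: "\<And>n i j. i \<in> {1..n} \<Longrightarrow> j \<in> {1..n} \<Longrightarrow> W n i j \<in> borel_measurable M"
    and herm: "\<And>n i j x. i \<in> {1..n} \<Longrightarrow> j \<in> {1..n} \<Longrightarrow> W n j i x = cnj (W n i j x)"
    and indep: "\<And>n. prob_space.indep_vars M (\<lambda>_. borel) (\<lambda>p. W n (fst p) (snd p))
                       {(i, j). 1 \<le> i \<and> i \<le> j \<and> j \<le> n}"
    and mean0: "\<And>n i j. i \<in> {1..n} \<Longrightarrow> j \<in> {1..n} \<Longrightarrow> (\<integral>x. W n i j x \<partial>M) = 0"
    and finvar: "\<And>n i j. i \<in> {1..n} \<Longrightarrow> j \<in> {1..n} \<Longrightarrow>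
                   integrable M (\<lambda>x. (cmod (W n i j x))\<^sup>2)"
    and C: "C \<ge> 0"
    and rowsum: "\<And>n i. i \<in> {1..n} \<Longrightarrow> (\<Sum>j = 1..n. cvariance M (W n i j)) \<le> C"
    and T: "tree V E" and m: "card E = m"
    and u: "u \<in> V" and i: "i \<in> {1..n}"
  shows "(\<Sum>F \<in> {F \<in> injs V n. F u = i}. Pw M W n E F) \<le> C ^ m"
proof -
  define g where "g B = cvariance M (W n (Min B) (Max B))" for B
  define S where "S v = (if v = u then {i} else {1..n})" for v
  have edge_weight: "g {a, b} = cvariance M (W n a b)" if "a \<in> {1..n}" "b \<in> {1..n}" for a b
  proof (cases "a \<le> b")
    case False
    have "W n b a = (\<lambda>x. cnj (W n a b x))" using herm[OF that] by (rule ext)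
    then show ?thesis using False by (simp add: g_def min_def max_def cvariance_cnj)
  qed (simp add: g_def min_def max_def)
  have row_sum: "(\<Sum>b\<in>{1..n}. g {a, b}) \<le> C" if "a \<in> {1..n}" for a
    using rowsum[OF that] edge_weight[OF that] by simp
  have "(\<Sum>F \<in> {F \<in> injs V n. F u = i}. Pw M W n E F)
      \<le> (\<Sum>F\<in>Pi\<^sub>E V S. \<Prod>e\<in>E. g (F ` e))"
    unfolding Pw_def g_def[symmetric] using tree_finite(1)[OF T]
    by (intro sum_mono2 prod_nonneg finite_PiE)
       (auto simp: injs_def S_def g_def cvariance_nonneg PiE_iff extensional_def)
  also have "\<dots> \<le> card (S u) * C ^ card E"
    by (rule tree_sum_prod_edge_weights_le[OF T u _ finite_atLeastAtMost _ row_sum C])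
       (use i in \<open>auto simp: S_def g_def cvariance_nonneg\<close>)
  finally show ?thesis by (simp add: S_def m)
qed

end
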